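(* Let $k\ge1$, and let $\mathcal P=\{p_1,\dots,p_{k^2}\}$ be a family of real polynomials in the commuting variables $x_1,\dots,x_{2k^2}$ admitting an nc representation $p(X,Y)$. Suppose a term $a\,x_i^sx_j^t$ with $a\ne0$ and positive integers $s,t$ occurs in some polynomial of the family, and that for some $c\in\{1,\dots,k\}$ one of $x_i,x_j$ is the $(c,c)$ entry of $X$ and the other is the $(c,c)$ entry of $Y$. Then that polynomial is in position $(c,c)$ of the array $p(X,Y)$.
   Context: The family $\mathcal P$ admits an nc representation $p(X,Y)$ if there are $k\times k$ matrices $X,Y$ whose $2k^2$ entries are the variables $x_1,\dots,x_{2k^2}$, each used exactly once, and a noncommutative polynomial $p$ in two letters with real coefficients such that the matrix $p(X,Y)$ is a $k\times k$ array whose entries are $p_1,\dots,p_{k^2}$, each exactly once. A "term" means a monomial with its nonzero coefficient after collecting like terms. *)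

theory Defs
  imports Complex_Main "HOL-Library.FuncSet"
begin

text \<open>Commutative real polynomials in variables x_0, x_1, ... are represented as
  coefficient functions on monomials; a monomial is an exponent function
  nat => nat (exponent of each variable).  Noncommutative polynomials in two letters
  are coefficient functions on words over bool (False = letter X, True = letter Y),
  with finite support.\<close>

type_synonym monom = "nat \<Rightarrow> nat"
type_synonym cpoly = "monom \<Rightarrow> real"
type_synonym ncpoly = "bool list \<Rightarrow> real"

text \<open>v b r c is the index of the variable sitting at entry (r,c) of X (b = False)
  or of Y (b = True).  Rows/columns are indexed 0..k-1, variables 0..2k^2-1.\<close>

definition valid_vars :: "nat \<Rightarrow> (bool \<Rightarrow> nat \<Rightarrow> nat \<Rightarrow> nat) \<Rightarrow> bool" where
  "valid_vars k v \<longleftrightarrow>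
     bij_betw (\<lambda>(b, r, c). v b r c) (UNIV \<times> {..<k} \<times> {..<k}) {..<2 * k^2}"

definition paths :: "nat \<Rightarrow> bool list \<Rightarrow> nat \<Rightarrow> nat \<Rightarrow> (nat \<Rightarrow> nat) set" where
  "paths k w r c = {i \<in> {..length w} \<rightarrow>\<^sub>E {..<k}. i 0 = r \<and> i (length w) = c}"

definition path_monom :: "(bool \<Rightarrow> nat \<Rightarrow> nat \<Rightarrow> nat) \<Rightarrow> bool list \<Rightarrow> (nat \<Rightarrow> nat) \<Rightarrow> monom" where
  "path_monom v w i = (\<lambda>x. card {l. l < length w \<and> v (w ! l) (i l) (i (Suc l)) = x})"

text \<open>Entry (r,c) of the matrix p(X,Y), as a commutative polynomial.\<close>
definition nc_entry :: "nat \<Rightarrow> (bool \<Rightarrow> nat \<Rightarrow> nat \<Rightarrow> nat) \<Rightarrow> ncpoly \<Rightarrow> nat \<Rightarrow> nat \<Rightarrow> cpoly" where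
  "nc_entry k v p r c = (\<lambda>m. \<Sum>w\<in>{w. p w \<noteq> 0}.
      p w * real (card {i \<in> paths k w r c. path_monom v w i = m}))"

definition nc_representation :: "nat \<Rightarrow> cpoly set \<Rightarrow> (bool \<Rightarrow> nat \<Rightarrow> nat \<Rightarrow> nat) \<Rightarrow> ncpoly \<Rightarrow> bool" where
  "nc_representation k P v p \<longleftrightarrow>
     valid_vars k v \<and> finite {w. p w \<noteq> 0} \<and>
     bij_betw (\<lambda>(r, c). nc_entry k v p r c) ({..<k} \<times> {..<k}) P"

definition admits_nc_rep :: "nat \<Rightarrow> cpoly set \<Rightarrow> bool" where
  "admits_nc_rep k P \<longleftrightarrow> (\<exists>v p. nc_representation k P v p)"

definition monom2 :: "nat \<Rightarrow> nat \<Rightarrow> nat \<Rightarrow> nat \<Rightarrow> monom" where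
  "monom2 i s j t = (\<lambda>x. if x = i then s else if x = j then t else 0)"

end

theory Submission
  imports Defs
begin

text \<open>A monomial of p(X,Y) at position (r,c) is the product of matrix entries along an index
  path from r to c. If it involves only the two diagonal entries X(c,c) and Y(c,c), every
  step of the path stays at index c (the variables of X and Y are distinct), so the path
  starts and ends at c; since s, t > 0 the path is nonempty, hence (r,c) = (c,c).\<close>

lemma valid_vars_inj:
  assumes "valid_vars k v" "r < k" "c < k" "r' < k" "c' < k" "v b r c = v b' r' c'"
  shows "b = b' \<and> r = r' \<and> c = c'"
proof -
  have "inj_on (\<lambda>(b, r, c). v b r c) (UNIV \<times> {..<k} \<times> {..<k})"
    using assms(1) unfolding valid_vars_def bij_betw_def by simp
  from inj_onD[OF this, of "(b, r, c)" "(b', r', c')"] show ?thesis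
    using assms(2-6) by auto
qed

lemma path_monom_eq_0_iff:
  "path_monom v w i x = 0 \<longleftrightarrow> (\<forall>l < length w. v (w ! l) (i l) (i (Suc l)) \<noteq> x)"
  unfolding path_monom_def by auto

lemma monom2_eq_0_iff: "monom2 i s j t x = 0 \<longleftrightarrow> (x = i \<longrightarrow> s = 0) \<and> (x \<noteq> i \<longrightarrow> x = j \<longrightarrow> t = 0)"
  unfolding monom2_def by auto

lemma nc_entry_nonzero_obtains_path:
  assumes "nc_entry k v p r c m \<noteq> 0"
  obtains w i where "i \<in> paths k w r c" "path_monom v w i = m"
proof -
  obtain w where "p w * real (card {i \<in> paths k w r c. path_monom v w i = m}) \<noteq> 0"
    using assms unfolding nc_entry_def by (meson sum.not_neutral_contains_not_neutral)
  then have "{i \<in> paths k w r c. path_monom v w i = m} \<noteq> {}"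
    by (metis card.empty mult_zero_right of_nat_0)
  then show ?thesis
    using that by blast
qed

lemma path_in_diagonal_entry:
  assumes "valid_vars k v" "d < k" "i \<in> paths k w r c" "w \<noteq> []"
    and diag: "\<And>x. path_monom v w i x \<noteq> 0 \<Longrightarrow> x = v False d d \<or> x = v True d d"
  shows "r = d \<and> c = d"
proof -
  have bounded: "i l < k" if "l \<le> length w" for l
    using assms(3) that unfolding paths_def by auto
  have step: "i l = d \<and> i (Suc l) = d" if "l < length w" for l
  proof -
    have "path_monom v w i (v (w ! l) (i l) (i (Suc l))) \<noteq> 0"
      using that by (auto simp: path_monom_eq_0_iff)
    then show ?thesis
      using diag valid_vars_inj[OF assms(1)] bounded that assms(2)
      by (metis Suc_leI less_imp_le_nat)
  qed
  have "i 0 = r" "i (length w) = c"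
    using assms(3) unfolding paths_def by auto
  then show ?thesis
    using step[of 0] step[of "length w - 1"] \<open>w \<noteq> []\<close> by simp
qed

theorem lemma2p18:
  fixes k :: nat and P :: "cpoly set" and v :: "bool \<Rightarrow> nat \<Rightarrow> nat \<Rightarrow> nat"
    and p :: ncpoly and q :: cpoly and i j s t c :: nat
  assumes "k \<ge> 1"
    and "card P = k^2"
    and rep: "nc_representation k P v p"
    and "q \<in> P"
    and "s > 0" and "t > 0"
    and "q (monom2 i s j t) \<noteq> 0"
    and "c < k"
    and "(i = v False c c \<and> j = v True c c) \<or> (i = v True c c \<and> j = v False c c)"
  shows "nc_entry k v p c c = q"
proof -
  have vars: "valid_vars k v"
    using rep unfolding nc_representation_def by simp
  obtain r c' where "r < k" "c' < k" and q: "q = nc_entry k v p r c'"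
    using rep \<open>q \<in> P\<close> unfolding nc_representation_def bij_betw_def by auto
  then obtain w ii where path: "ii \<in> paths k w r c'" and monom: "path_monom v w ii = monom2 i s j t"
    using \<open>q (monom2 i s j t) \<noteq> 0\<close> nc_entry_nonzero_obtains_path by metis
  have "w \<noteq> []"
    using monom \<open>s > 0\<close> path_monom_eq_0_iff[of v w ii i] monom2_eq_0_iff[of i s j t i] by auto
  moreover have "x = v False c c \<or> x = v True c c" if "path_monom v w ii x \<noteq> 0" for x
    using that monom assms(9) by (auto simp: monom2_eq_0_iff)
  ultimately have "r = c \<and> c' = c"
    using path_in_diagonal_entry[OF vars \<open>c < k\<close> path] by blast
  then show ?thesis
    using q by simp
qed

end
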